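(* Let $M$ be a three-holed sphere with $\pi_1(M)=\langle A,B,C: ABC=I\rangle$, where $A,B,C$ represent the three boundary components. For $\rho\in\operatorname{Hom}(\pi_1(M),\mathrm{SU}(2))$ write $a=\operatorname{tr}\rho(A)$, $b=\operatorname{tr}\rho(B)$, $c=\operatorname{tr}\rho(C)$. Then: (1) $\rho$ is $\mathrm{Spin}(2)$ if and only if $a^2+b^2+c^2-abc-4=0$; (2) $\rho$ is $\mathrm{Pin}(2)$ and not $\mathrm{Spin}(2)$ if and only if $a^2+b^2+c^2-abc-4\neq0$ and at least two of the three numbers $\operatorname{tr}\rho(A)$, $\operatorname{tr}\rho(B)$, $\operatorname{tr}\rho(AB)$ are zero.
   Context: Let $p:\mathrm{SU}(2)\to\mathrm{SO}(3)$ be the double cover. $\mathrm{Pin}(2)=p^{-1}(\mathrm{O}(2))$ for a subgroup $\mathrm{O}(2)\subset\mathrm{SO}(3)$, and $\mathrm{Spin}(2)$ is its identity component (a maximal torus of $\mathrm{SU}(2)$). For a subgroup $G\subset\mathrm{SU}(2)$, a representation $\rho$ is said to be $G$ if $\rho(\pi_1(M))$ is contained in some subgroup of $\mathrm{SU}(2)$ isomorphic to (i.e. a conjugate copy of) $G$, and not $G$ if it is contained in no such copy. *)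

theory Defs
  imports "HOL-Analysis.Analysis"
begin

type_synonym cmat = "complex^2^2"

definition mat2 :: "complex \<Rightarrow> complex \<Rightarrow> complex \<Rightarrow> complex \<Rightarrow> cmat" where
  "mat2 p q r s = (\<chi> i j. if i = 1 then (if j = 1 then p else q) else (if j = 1 then r else s))"

text \<open>Conjugate transpose; for elements of SU(2) this is the group inverse.\<close>
definition adj :: "cmat \<Rightarrow> cmat" where
  "adj U = (\<chi> i j. cnj (U $ j $ i))"

definition SU2 :: "cmat set" where
  "SU2 = {U. U ** adj U = mat 1 \<and> det U = 1}"

definition Spin2_std :: "cmat set" where
  "Spin2_std = {mat2 z 0 0 (cnj z) | z. cmod z = 1}"

text \<open>Standard Pin(2) = p^{-1}(O(2)) = Spin(2) union j Spin(2), j = [[0,1],[-1,0]].\<close>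
definition Pin2_std :: "cmat set" where
  "Pin2_std = Spin2_std \<union> {mat2 0 z (- cnj z) 0 | z. cmod z = 1}"

definition conj_copy :: "cmat \<Rightarrow> cmat set \<Rightarrow> cmat set" where
  "conj_copy g H = (\<lambda>h. g ** h ** adj g) ` H"

text \<open>Image of the representation of the free group on A, B (pi_1 of the
  three-holed sphere, C = (AB)^{-1}) determined by rho(A) = X, rho(B) = Y:
  the set of all words in X, Y and their inverses.\<close>
inductive_set rep_image :: "cmat \<Rightarrow> cmat \<Rightarrow> cmat set" for X Y where
  one: "mat 1 \<in> rep_image X Y"
| mX: "Z \<in> rep_image X Y \<Longrightarrow> Z ** X \<in> rep_image X Y"
| mY: "Z \<in> rep_image X Y \<Longrightarrow> Z ** Y \<in> rep_image X Y"
| mXi: "Z \<in> rep_image X Y \<Longrightarrow> Z ** adj X \<in> rep_image X Y"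
| mYi: "Z \<in> rep_image X Y \<Longrightarrow> Z ** adj Y \<in> rep_image X Y"

definition rep_is :: "cmat set \<Rightarrow> cmat \<Rightarrow> cmat \<Rightarrow> bool" where
  "rep_is G X Y \<longleftrightarrow> (\<exists>g\<in>SU2. rep_image X Y \<subseteq> conj_copy g G)"

end

theory Submission
  imports Defs
begin

text \<open>Identify SU(2) with the unit quaternions \<open>t + v\<close>, \<open>v \<in> \<real>\<^sup>3\<close>, so that \<open>tr U = 2t\<close>.
  Conjugation by \<open>g\<close> fixes \<open>t\<close> and rotates \<open>v\<close> (the adjoint action \<open>Ad g\<close>), and these
  rotations act transitively on the unit sphere. The conjugates of Spin(2) are therefore the
  groups \<open>{t + s w}\<close> for unit vectors \<open>w\<close>, and the conjugates of Pin(2) add the pure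
  quaternions orthogonal to \<open>w\<close>. Writing \<open>X = x\<^sub>0 + x\<close>, \<open>Y = y\<^sub>0 + y\<close>, the representation
  is Spin(2) iff \<open>x\<close> and \<open>y\<close> lie on a common line, i.e. \<open>x \<times> y = 0\<close>; if not, it is Pin(2)
  iff a line can be chosen so that each of \<open>X\<close>, \<open>Y\<close> lies on it or is pure and orthogonal
  to it, which is the stated trace condition since \<open>tr XY = 2(x\<^sub>0 y\<^sub>0 - x \<bullet> y)\<close>.
  Finally the Lagrange identity gives \<open>a\<^sup>2 + b\<^sup>2 + c\<^sup>2 - abc - 4 = -4 \<bar>x \<times> y\<bar>\<^sup>2\<close>.\<close>

unbundle cross3_syntax

lemma in_span_unit_iff:
  fixes x w :: "'a::real_inner"
  assumes "norm w = 1"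
  shows "x \<in> span {w} \<longleftrightarrow> (x \<bullet> w)\<^sup>2 = (norm x)\<^sup>2"
proof -
  have ww: "w \<bullet> w = 1"
    using assms by (simp add: norm_eq_1)
  have "x \<in> span {w} \<longleftrightarrow> x = (x \<bullet> w) *\<^sub>R w"
    using ww by (auto simp: span_singleton)
  also have "\<dots> \<longleftrightarrow> (norm (x - (x \<bullet> w) *\<^sub>R w))\<^sup>2 = 0"
    by simp
  also have "(norm (x - (x \<bullet> w) *\<^sub>R w))\<^sup>2 = (norm x)\<^sup>2 - (x \<bullet> w)\<^sup>2"
    unfolding power2_norm_eq_inner using ww
    by (simp add: inner_diff_left inner_diff_right inner_commute power2_eq_square)
  finally show ?thesis
    by auto
qed

lemma span_sgn: "span {sgn v} = span {v}"
  for v :: "'a::real_normed_vector"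
proof (cases "v = 0")
  case False
  then show ?thesis
    using span_image_scale[of "{v}" "\<lambda>_. inverse (norm v)"] by (simp add: sgn_div_norm)
qed simp

lemma common_line_iff_cross_eq_0:
  fixes x y :: "real^3"
  shows "(\<exists>w. norm w = 1 \<and> x \<in> span {w} \<and> y \<in> span {w}) \<longleftrightarrow> x \<times> y = 0"
proof
  assume "\<exists>w. norm w = 1 \<and> x \<in> span {w} \<and> y \<in> span {w}"
  then obtain w s t where "x = s *\<^sub>R w" "y = t *\<^sub>R w"
    by (auto simp: span_singleton)
  then show "x \<times> y = 0"
    by (simp add: cross_mult_left cross_mult_right)
next
  assume "x \<times> y = 0"
  then have xy: "x = 0 \<or> y = 0 \<or> (\<exists>c. y = c *\<^sub>R x)"
    by (simp add: cross_eq_0 collinear_lemma)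
  define v where "v = (if x = 0 then if y = 0 then axis 1 1 else y else x)"
  have "v \<noteq> 0" "x \<in> span {v}" "y \<in> span {v}"
    using xy by (auto simp: v_def span_base span_zero intro: span_scale)
  then show "\<exists>w. norm w = 1 \<and> x \<in> span {w} \<and> y \<in> span {w}"
    by (intro exI[of _ "sgn v"]) (simp add: norm_sgn span_sgn)
qed

lemma common_line_or_orthogonal_iff:
  fixes x y :: "real^3"
  assumes "x \<times> y \<noteq> 0"
  shows "(\<exists>w. norm w = 1 \<and> (x \<in> span {w} \<or> P \<and> x \<bullet> w = 0) \<and> (y \<in> span {w} \<or> Q \<and> y \<bullet> w = 0))
    \<longleftrightarrow> P \<and> Q \<or> P \<and> x \<bullet> y = 0 \<or> Q \<and> x \<bullet> y = 0"
proof
  assume "\<exists>w. norm w = 1 \<and> (x \<in> span {w} \<or> P \<and> x \<bullet> w = 0) \<and> (y \<in> span {w} \<or> Q \<and> y \<bullet> w = 0)"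
  then obtain w where w: "norm w = 1" "x \<in> span {w} \<or> P \<and> x \<bullet> w = 0" "y \<in> span {w} \<or> Q \<and> y \<bullet> w = 0"
    by blast
  have "\<not> (x \<in> span {w} \<and> y \<in> span {w})"
    using assms w(1) common_line_iff_cross_eq_0 by blast
  moreover have "x \<in> span {w} \<Longrightarrow> y \<bullet> w = 0 \<Longrightarrow> x \<bullet> y = 0"
    "y \<in> span {w} \<Longrightarrow> x \<bullet> w = 0 \<Longrightarrow> x \<bullet> y = 0"
    by (auto simp: span_singleton inner_commute)
  ultimately show "P \<and> Q \<or> P \<and> x \<bullet> y = 0 \<or> Q \<and> x \<bullet> y = 0"
    using w by blast
next
  have "x \<noteq> 0" "y \<noteq> 0"
    using assms by auto
  assume "P \<and> Q \<or> P \<and> x \<bullet> y = 0 \<or> Q \<and> x \<bullet> y = 0"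
  then consider "P" "Q" | "P" "x \<bullet> y = 0" | "Q" "x \<bullet> y = 0"
    by blast
  then show "\<exists>w. norm w = 1 \<and> (x \<in> span {w} \<or> P \<and> x \<bullet> w = 0) \<and> (y \<in> span {w} \<or> Q \<and> y \<bullet> w = 0)"
  proof cases
    case 1
    then show ?thesis
      using assms by (intro exI[of _ "sgn (x \<times> y)"]) (simp add: norm_sgn sgn_div_norm dot_cross_self)
  next
    case 2
    have "x \<bullet> sgn y = 0"
      using 2 by (simp add: sgn_div_norm)
    then show ?thesis
      using 2 \<open>y \<noteq> 0\<close> by (intro exI[of _ "sgn y"]) (simp add: norm_sgn span_sgn span_base)
  next
    case 3
    have "y \<bullet> sgn x = 0"
      using 3 by (simp add: sgn_div_norm inner_commute)
    then show ?thesis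
      using 3 \<open>x \<noteq> 0\<close> by (intro exI[of _ "sgn x"]) (simp add: norm_sgn span_sgn span_base)
  qed
qed

lemma mat2_nth [simp]:
  "mat2 p q r s $ 1 $ 1 = p" "mat2 p q r s $ 1 $ 2 = q"
  "mat2 p q r s $ 2 $ 1 = r" "mat2 p q r s $ 2 $ 2 = s"
  by (simp_all add: mat2_def)

lemma cmat_eq_iff:
  "(A::cmat) = B \<longleftrightarrow> A$1$1 = B$1$1 \<and> A$1$2 = B$1$2 \<and> A$2$1 = B$2$1 \<and> A$2$2 = B$2$2"
  by (auto simp: vec_eq_iff forall_2)

lemma mat2_eq_iff: "mat2 p q r s = mat2 p' q' r' s' \<longleftrightarrow> p = p' \<and> q = q' \<and> r = r' \<and> s = s'"
  by (simp add: cmat_eq_iff)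

lemma mat2_mult:
  "mat2 a b c d ** mat2 e f g h = mat2 (a*e + b*g) (a*f + b*h) (c*e + d*g) (c*f + d*h)"
  by (simp add: cmat_eq_iff matrix_matrix_mult_def sum_2)

lemma mat_1_mat2: "mat 1 = mat2 1 0 0 1"
  by (simp add: cmat_eq_iff mat_def)

lemma adj_mat2: "adj (mat2 p q r s) = mat2 (cnj p) (cnj r) (cnj q) (cnj s)"
  by (simp add: cmat_eq_iff adj_def)

lemma adj_adj [simp]: "adj (adj A) = A"
  by (simp add: adj_def vec_eq_iff)

lemma adj_mult: "adj (A ** B) = adj B ** adj (A::cmat)"
  by (simp add: cmat_eq_iff adj_def matrix_matrix_mult_def sum_2 mult.commute)

lemma trace_adj: "trace (adj (A::cmat)) = cnj (trace A)"
  by (simp add: trace_def adj_def sum_2)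

section \<open>SU(2) as the unit quaternions\<close>

text \<open>\<open>quat t v\<close> is the quaternion \<open>t + v$1 i + v$2 j + v$3 k\<close> in the standard
  representation \<open>i = diag(\<i>, -\<i>)\<close>, \<open>j = [[0,1],[-1,0]]\<close>, \<open>k = [[0,\<i>],[\<i>,0]]\<close>;
  \<open>re_part\<close> and \<open>im_part\<close> read the coordinates back off the first row.\<close>

definition quat :: "real \<Rightarrow> real^3 \<Rightarrow> cmat" where
  "quat t v = mat2 (Complex t (v$1)) (Complex (v$2) (v$3)) (Complex (- v$2) (v$3)) (Complex t (- v$1))"

definition re_part :: "cmat \<Rightarrow> real" where
  "re_part U = Re (U$1$1)"

definition im_part :: "cmat \<Rightarrow> real^3" where
  "im_part U = vector [Im (U$1$1), Re (U$1$2), Im (U$1$2)]"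

lemma re_part_quat [simp]: "re_part (quat t v) = t"
  by (simp add: re_part_def quat_def)

lemma im_part_quat [simp]: "im_part (quat t v) = v"
  by (simp add: im_part_def quat_def vec_eq_iff forall_3)

lemma quat_eq_iff: "quat s v = quat t w \<longleftrightarrow> s = t \<and> v = w"
  by (metis re_part_quat im_part_quat)

lemma quat_mult:
  "quat s v ** quat t w = quat (s * t - v \<bullet> w) (s *\<^sub>R w + t *\<^sub>R v + v \<times> w)"
  by (simp add: quat_def mat2_mult mat2_eq_iff cross3_def inner_vec_def sum_3 complex_eq_iff algebra_simps)

lemma adj_quat: "adj (quat t v) = quat t (- v)"
  by (simp add: quat_def adj_mat2 mat2_eq_iff complex_eq_iff)

lemma trace_quat: "trace (quat t v) = of_real (2 * t)"
  by (simp add: quat_def trace_def sum_2 complex_eq_iff)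

lemma det_quat: "det (quat t v) = of_real (t\<^sup>2 + (norm v)\<^sup>2)"
  unfolding power2_norm_eq_inner
  by (simp add: quat_def det_2 complex_eq_iff inner_vec_def sum_3 power2_eq_square)

lemma mat_1_quat: "mat 1 = quat 1 0"
  by (simp add: mat_1_mat2 quat_def mat2_eq_iff complex_eq_iff)

lemma quat_in_SU2_iff: "quat t v \<in> SU2 \<longleftrightarrow> t\<^sup>2 + (norm v)\<^sup>2 = 1"
proof -
  have "quat t v ** adj (quat t v) = quat (t\<^sup>2 + (norm v)\<^sup>2) 0"
    by (simp add: adj_quat quat_mult power2_eq_square dot_square_norm)
  moreover have "det (quat t v) = 1 \<longleftrightarrow> t\<^sup>2 + (norm v)\<^sup>2 = 1"
    by (simp only: det_quat of_real_eq_1_iff)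
  ultimately show ?thesis
    by (simp add: SU2_def mat_1_quat quat_eq_iff)
qed

lemma SU2_eq_quat:
  assumes "U \<in> SU2"
  shows "U = quat (re_part U) (im_part U)"
proof -
  define p q r s where "p = U$1$1" "q = U$1$2" "r = U$2$1" "s = U$2$2"
  have U: "U = mat2 p q r s"
    by (simp add: cmat_eq_iff p_q_r_s_def)
  have "p * s - q * r = 1" "U ** adj U = mat 1"
    using assms by (simp_all add: SU2_def U det_2)
  then have "mat2 s (-q) (-r) p ** U = mat 1 \<and> U ** adj U = mat 1"
    by (simp add: U mat2_mult cmat_eq_iff mat_def algebra_simps)
  \<comment> \<open>the adjugate is a left inverse and \<open>adj U\<close> a right inverse, so they coincide\<close>
  then have "adj U = mat2 s (-q) (-r) p"
    by (metis matrix_mul_assoc matrix_mul_lid matrix_mul_rid)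
  then have "cnj p = s" "cnj q = - r"
    by (simp_all add: U adj_mat2 mat2_eq_iff)
  then show ?thesis
    by (auto simp: U quat_def mat2_eq_iff complex_eq_iff re_part_def im_part_def)
qed

lemma SU2_iff:
  "U \<in> SU2 \<longleftrightarrow> U = quat (re_part U) (im_part U) \<and> (re_part U)\<^sup>2 + (norm (im_part U))\<^sup>2 = 1"
  by (metis SU2_eq_quat quat_in_SU2_iff)

lemma SU2_cases:
  assumes "U \<in> SU2"
  obtains t v where "U = quat t v" "t\<^sup>2 + (norm v)\<^sup>2 = 1"
  using assms SU2_iff by blast

lemma adj_mult_SU2:
  assumes "U \<in> SU2"
  shows "adj U ** U = mat 1" "U ** adj U = mat 1"
  using assms
  by (auto elim!: SU2_cases simp: adj_quat quat_mult mat_1_quat quat_eq_iff dot_square_norm power2_eq_square)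

lemma SU2_adj: "U \<in> SU2 \<Longrightarrow> adj U \<in> SU2"
  by (auto elim!: SU2_cases simp: adj_quat quat_in_SU2_iff)

lemma SU2_mult:
  assumes "U \<in> SU2" "V \<in> SU2"
  shows "U ** V \<in> SU2"
proof -
  have "(U ** V) ** adj (U ** V) = U ** (V ** adj V) ** adj U"
    by (simp add: adj_mult matrix_mul_assoc)
  also have "\<dots> = mat 1"
    using assms by (simp add: adj_mult_SU2)
  moreover have "det (U ** V) = 1"
    using assms by (simp add: SU2_def det_mul)
  ultimately show ?thesis
    by (simp add: SU2_def)
qed

lemma trace_SU2: "U \<in> SU2 \<Longrightarrow> trace U = of_real (2 * re_part U)"
  by (auto elim!: SU2_cases simp: trace_quat)

lemma trace_mult_SU2:
  "U \<in> SU2 \<Longrightarrow> V \<in> SU2 \<Longrightarrow>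
    trace (U ** V) = of_real (2 * (re_part U * re_part V - im_part U \<bullet> im_part V))"
  by (auto elim!: SU2_cases simp: trace_quat quat_mult)

lemma fricke_polynomial_SU2:
  assumes "X \<in> SU2" "Y \<in> SU2"
  shows "(trace X)\<^sup>2 + (trace Y)\<^sup>2 + (trace (adj (X ** Y)))\<^sup>2
      - trace X * trace Y * trace (adj (X ** Y)) - 4
    = - 4 * of_real ((norm (im_part X \<times> im_part Y))\<^sup>2)"
proof -
  define x0 y0 d where "x0 = re_part X" "y0 = re_part Y" "d = im_part X \<bullet> im_part Y"
  have norms: "(norm (im_part X))\<^sup>2 = 1 - x0\<^sup>2" "(norm (im_part Y))\<^sup>2 = 1 - y0\<^sup>2"
    using assms SU2_iff x0_y0_d_def by (simp_all add: eq_diff_eq')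
  have "(norm (im_part X \<times> im_part Y))\<^sup>2 = (norm (im_part X))\<^sup>2 * (norm (im_part Y))\<^sup>2 - d\<^sup>2"
    using norm_cross_dot[of "im_part X" "im_part Y"] by (simp add: x0_y0_d_def power_mult_distrib)
  then have "(norm (im_part X \<times> im_part Y))\<^sup>2 = (1 - x0\<^sup>2) * (1 - y0\<^sup>2) - d\<^sup>2"
    unfolding norms .
  then have "(2 * x0)\<^sup>2 + (2 * y0)\<^sup>2 + (2 * (x0 * y0 - d))\<^sup>2 - (2 * x0) * (2 * y0) * (2 * (x0 * y0 - d)) - 4
      = - 4 * (norm (im_part X \<times> im_part Y))\<^sup>2"
    by (simp add: power2_eq_square algebra_simps)
  then have "complex_of_real ((2 * x0)\<^sup>2 + (2 * y0)\<^sup>2 + (2 * (x0 * y0 - d))\<^sup>2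
      - (2 * x0) * (2 * y0) * (2 * (x0 * y0 - d)) - 4) = - 4 * of_real ((norm (im_part X \<times> im_part Y))\<^sup>2)"
    by simp
  moreover have "trace X = of_real (2 * x0)" "trace Y = of_real (2 * y0)"
    "trace (adj (X ** Y)) = of_real (2 * (x0 * y0 - d))"
    using assms by (simp_all add: trace_SU2 trace_adj trace_mult_SU2 x0_y0_d_def)
  ultimately show ?thesis
    by simp
qed

lemma Spin2_std_iff: "U \<in> Spin2_std \<longleftrightarrow> U \<in> SU2 \<and> im_part U \<in> span {axis 1 1}"
proof -
  have mat2_eq: "mat2 z 0 0 (cnj z) = quat (Re z) (Im z *\<^sub>R axis 1 1)" for z
    by (simp add: quat_def mat2_eq_iff complex_eq_iff axis_def)
  show ?thesis
  proof
    assume "U \<in> Spin2_std"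
    then obtain z where "cmod z = 1" "U = quat (Re z) (Im z *\<^sub>R axis 1 1)"
      by (auto simp: Spin2_std_def mat2_eq)
    then show "U \<in> SU2 \<and> im_part U \<in> span {axis 1 1}"
      by (simp add: quat_in_SU2_iff span_singleton flip: cmod_power2)
  next
    assume U: "U \<in> SU2 \<and> im_part U \<in> span {axis 1 1}"
    then obtain s where s: "im_part U = s *\<^sub>R axis 1 1"
      by (auto simp: span_singleton)
    define z where "z = Complex (re_part U) s"
    have "U = quat (re_part U) (s *\<^sub>R axis 1 1)"
      using U s SU2_eq_quat by metis
    also have "\<dots> = mat2 z 0 0 (cnj z)"
      by (simp add: mat2_eq z_def)
    finally have "U = mat2 z 0 0 (cnj z)" .
    moreover have "cmod z = 1"
      using U s SU2_iff by (simp add: z_def cmod_def)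
    ultimately show "U \<in> Spin2_std"
      by (auto simp: Spin2_std_def)
  qed
qed

lemma Pin2_std_iff:
  "U \<in> Pin2_std \<longleftrightarrow> U \<in> Spin2_std \<or> U \<in> SU2 \<and> re_part U = 0 \<and> im_part U \<bullet> axis 1 1 = 0"
proof -
  have mat2_eq: "mat2 0 z (- cnj z) 0 = quat 0 (vector [0, Re z, Im z])" for z
    by (simp add: quat_def mat2_eq_iff complex_eq_iff)
  have "U \<in> {mat2 0 z (- cnj z) 0 | z. cmod z = 1} \<longleftrightarrow>
      U \<in> SU2 \<and> re_part U = 0 \<and> im_part U \<bullet> axis 1 1 = 0"
  proof
    assume "U \<in> {mat2 0 z (- cnj z) 0 | z. cmod z = 1}"
    then obtain z where "cmod z = 1" "U = quat 0 (vector [0, Re z, Im z])"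
      by (auto simp: mat2_eq)
    then show "U \<in> SU2 \<and> re_part U = 0 \<and> im_part U \<bullet> axis 1 1 = 0"
      by (simp add: quat_in_SU2_iff power2_norm_eq_inner inner_vec_def sum_3 axis_def
          flip: cmod_power2 power2_eq_square)
  next
    assume U: "U \<in> SU2 \<and> re_part U = 0 \<and> im_part U \<bullet> axis 1 1 = 0"
    define z where "z = Complex (im_part U $ 2) (im_part U $ 3)"
    have "U = quat 0 (im_part U)"
      using U SU2_eq_quat by metis
    also have "im_part U = vector [0, Re z, Im z]"
      using U by (simp add: z_def inner_axis vec_eq_iff forall_3)
    finally have "U = mat2 0 z (- cnj z) 0"
      by (simp add: mat2_eq)
    moreover have "cmod z = 1"
    proof -
      have "im_part U $ 1 = 0" "(norm (im_part U))\<^sup>2 = 1"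
        using U SU2_iff[of U] by (auto simp: inner_axis)
      then show ?thesis
        unfolding power2_norm_eq_inner by (simp add: z_def cmod_def inner_vec_def sum_3 power2_eq_square)
    qed
    ultimately show "U \<in> {mat2 0 z (- cnj z) 0 | z. cmod z = 1}"
      by blast
  qed
  then show ?thesis
    unfolding Pin2_std_def by blast
qed

section \<open>The adjoint action\<close>

text \<open>\<open>Ad g\<close> is the rotation \<open>p(g)\<close> of the double cover \<open>SU(2) \<rightarrow> SO(3)\<close>, acting on pure
  quaternions.\<close>

definition Ad :: "cmat \<Rightarrow> real^3 \<Rightarrow> real^3" where
  "Ad g u = im_part (g ** quat 0 u ** adj g)"

lemma re_part_conj:
  assumes "g \<in> SU2" "U \<in> SU2"
  shows "re_part (adj g ** U ** g) = re_part U"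
proof -
  have "trace (adj g ** U ** g) = trace (g ** adj g ** U)"
    by (metis matrix_mul_assoc trace_mul_sym)
  also have "\<dots> = trace U"
    using assms adj_mult_SU2 by simp
  finally show ?thesis
    using assms by (simp add: trace_SU2 SU2_mult SU2_adj)
qed

lemma norm_im_part_conj:
  assumes "g \<in> SU2" "U \<in> SU2"
  shows "norm (im_part (adj g ** U ** g)) = norm (im_part U)"
proof -
  have "adj g ** U ** g \<in> SU2"
    using assms by (simp add: SU2_mult SU2_adj)
  then have "(norm (im_part (adj g ** U ** g)))\<^sup>2 = (norm (im_part U))\<^sup>2"
    using assms SU2_iff re_part_conj by (metis add_diff_cancel_left')
  then show ?thesis
    by (simp add: power2_eq_iff_nonneg)
qed

lemma inner_im_part_conj:
  assumes "g \<in> SU2" "U \<in> SU2" "norm u = 1"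
  shows "im_part (adj g ** U ** g) \<bullet> u = im_part U \<bullet> Ad g u"
proof -
  let ?V = "adj g ** U ** g" and ?W = "g ** quat 0 u ** adj g"
  have SU2: "quat 0 u \<in> SU2" "?V \<in> SU2" "?W \<in> SU2"
    using assms by (simp_all add: quat_in_SU2_iff SU2_mult SU2_adj)
  have "re_part ?W = 0"
    using re_part_conj[of "adj g" "quat 0 u"] SU2 assms by (simp add: SU2_adj)
  \<comment> \<open>both sides are read off \<open>tr (V u) = tr (U (g u g\<^sup>-\<^sup>1))\<close>, an instance of cyclicity\<close>
  have "trace (?V ** quat 0 u) = trace (adj g ** (U ** g ** quat 0 u))"
    by (simp add: matrix_mul_assoc)
  also have "\<dots> = trace (U ** ?W)"
    by (metis matrix_mul_assoc trace_mul_sym)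
  finally show ?thesis
    using SU2 assms \<open>re_part ?W = 0\<close> by (simp add: trace_mult_SU2 Ad_def)
qed

lemma norm_Ad:
  assumes "g \<in> SU2" "norm u = 1"
  shows "norm (Ad g u) = 1"
  using norm_im_part_conj[of "adj g" "quat 0 u"] assms
  by (simp add: Ad_def SU2_adj quat_in_SU2_iff)

lemma Ad_surj:
  assumes "norm w = 1"
  shows "\<exists>g\<in>SU2. Ad g (axis 1 1) = w"
proof (cases "w = - axis 1 1")
  case True
  have "quat 0 (axis 2 1) \<in> SU2"
    by (simp add: quat_in_SU2_iff)
  moreover have "Ad (quat 0 (axis 2 1)) (axis 1 1) = w"
    by (simp add: True Ad_def adj_quat quat_mult cross3_def vec_eq_iff forall_3 axis_def
        inner_vec_def sum_3)
  ultimately show ?thesis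
    by blast
next
  case False
  define n where "n = norm (w + axis 1 1)"
  have "n > 0"
    using False by (auto simp: n_def eq_neg_iff_add_eq_0)
  have ww: "w$1 * w$1 + w$2 * w$2 + w$3 * w$3 = 1"
    using assms by (simp add: norm_eq_1 inner_vec_def sum_3)
  have n2: "n\<^sup>2 = 2 + 2 * w$1"
    using ww unfolding n_def power2_norm_eq_inner
    by (simp add: inner_vec_def sum_3 axis_def algebra_simps)
  \<comment> \<open>\<open>g\<close> normalises \<open>1 - w i\<close>; as \<open>i\<^sup>2 = w\<^sup>2 = -1\<close>,
    \<open>(1 - w i) i = i + w = w (1 - w i)\<close>\<close>
  define g where "g = quat ((1 + w$1) / n) ((1 / n) *\<^sub>R (axis 1 1 \<times> w))"
  have "(norm (axis 1 1 \<times> w))\<^sup>2 = 1 - (w$1)\<^sup>2"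
    using norm_cross_dot[of "axis 1 1" w] assms by (simp add: inner_axis')
  then have "(1 + w$1)\<^sup>2 + (norm (axis 1 1 \<times> w))\<^sup>2 = n\<^sup>2"
    using n2 by (simp add: power2_eq_square algebra_simps)
  then have "g \<in> SU2"
    using \<open>n > 0\<close> unfolding g_def quat_in_SU2_iff by (simp add: power_divide field_simps)
  have "g ** quat 0 (axis 1 1) = quat 0 w ** g"
    using ww \<open>n > 0\<close> unfolding g_def quat_mult quat_eq_iff
    by (simp add: cross3_def vec_eq_iff forall_3 axis_def inner_vec_def sum_3 field_simps)
       (simp add: ww flip: distrib_left)
  then have "g ** quat 0 (axis 1 1) ** adj g = quat 0 w ** (g ** adj g)"
    by (simp add: matrix_mul_assoc)
  also have "\<dots> = quat 0 w"
    using \<open>g \<in> SU2\<close> by (simp add: adj_mult_SU2)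
  finally show ?thesis
    using \<open>g \<in> SU2\<close> by (intro bexI[of _ g]) (simp_all add: Ad_def)
qed

lemma conj_in_Spin2_std_iff:
  assumes "g \<in> SU2" "U \<in> SU2"
  shows "adj g ** U ** g \<in> Spin2_std \<longleftrightarrow> im_part U \<in> span {Ad g (axis 1 1)}"
proof -
  let ?V = "adj g ** U ** g"
  have "?V \<in> SU2"
    using assms by (simp add: SU2_mult SU2_adj)
  then have "?V \<in> Spin2_std \<longleftrightarrow> (im_part ?V \<bullet> axis 1 1)\<^sup>2 = (norm (im_part ?V))\<^sup>2"
    by (simp add: Spin2_std_iff in_span_unit_iff)
  also have "\<dots> \<longleftrightarrow> (im_part U \<bullet> Ad g (axis 1 1))\<^sup>2 = (norm (im_part U))\<^sup>2"
    using assms by (simp add: inner_im_part_conj norm_im_part_conj)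
  also have "\<dots> \<longleftrightarrow> im_part U \<in> span {Ad g (axis 1 1)}"
    using assms by (simp add: in_span_unit_iff norm_Ad)
  finally show ?thesis .
qed

lemma conj_in_Pin2_std_iff:
  assumes "g \<in> SU2" "U \<in> SU2"
  shows "adj g ** U ** g \<in> Pin2_std \<longleftrightarrow>
    im_part U \<in> span {Ad g (axis 1 1)} \<or> re_part U = 0 \<and> im_part U \<bullet> Ad g (axis 1 1) = 0"
proof -
  have "adj g ** U ** g \<in> SU2"
    using assms by (simp add: SU2_mult SU2_adj)
  then show ?thesis
    using assms by (simp add: Pin2_std_iff conj_in_Spin2_std_iff re_part_conj inner_im_part_conj)
qed

section \<open>Representations into conjugates of a subgroup\<close>

definition matrix_subgroup :: "cmat set \<Rightarrow> bool" where
  "matrix_subgroup G \<longleftrightarrow> mat 1 \<in> G \<and> (\<forall>A\<in>G. \<forall>B\<in>G. A ** B \<in> G) \<and> (\<forall>A\<in>G. adj A \<in> G)"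

lemma matrix_subgroup_Spin2_std: "matrix_subgroup Spin2_std"
  unfolding matrix_subgroup_def Spin2_std_def
proof (intro conjI ballI)
  show "mat 1 \<in> {mat2 z 0 0 (cnj z) |z. cmod z = 1}"
    by (auto simp: mat_1_mat2 intro!: exI[of _ 1])
next
  fix A B assume "A \<in> {mat2 z 0 0 (cnj z) |z. cmod z = 1}" "B \<in> {mat2 z 0 0 (cnj z) |z. cmod z = 1}"
  then show "A ** B \<in> {mat2 z 0 0 (cnj z) |z. cmod z = 1}" "adj A \<in> {mat2 z 0 0 (cnj z) |z. cmod z = 1}"
    by (auto simp: mat2_mult adj_mat2 mat2_eq_iff norm_mult)
qed

lemma matrix_subgroup_Pin2_std: "matrix_subgroup Pin2_std"
  unfolding matrix_subgroup_def Pin2_std_def Spin2_std_def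
proof (intro conjI ballI)
  show "mat 1 \<in> {mat2 z 0 0 (cnj z) |z. cmod z = 1} \<union> {mat2 0 z (- cnj z) 0 |z. cmod z = 1}"
    by (auto simp: mat_1_mat2 intro!: exI[of _ 1])
next
  fix A B
  assume "A \<in> {mat2 z 0 0 (cnj z) |z. cmod z = 1} \<union> {mat2 0 z (- cnj z) 0 |z. cmod z = 1}"
    "B \<in> {mat2 z 0 0 (cnj z) |z. cmod z = 1} \<union> {mat2 0 z (- cnj z) 0 |z. cmod z = 1}"
  then show "A ** B \<in> {mat2 z 0 0 (cnj z) |z. cmod z = 1} \<union> {mat2 0 z (- cnj z) 0 |z. cmod z = 1}"
    "adj A \<in> {mat2 z 0 0 (cnj z) |z. cmod z = 1} \<union> {mat2 0 z (- cnj z) 0 |z. cmod z = 1}"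
    by (auto simp: mat2_mult adj_mat2 mat2_eq_iff norm_mult)
qed

lemma conj_copy_mem_iff:
  assumes "g \<in> SU2"
  shows "M \<in> conj_copy g G \<longleftrightarrow> adj g ** M ** g \<in> G"
proof -
  have "adj g ** (g ** H ** adj g) ** g = (adj g ** g) ** H ** (adj g ** g)"
    "g ** (adj g ** H ** g) ** adj g = (g ** adj g) ** H ** (g ** adj g)" for H
    by (simp_all add: matrix_mul_assoc)
  then have cancel: "adj g ** (g ** H ** adj g) ** g = H" "g ** (adj g ** H ** g) ** adj g = H" for H
    using adj_mult_SU2[OF assms] by simp_all
  show ?thesis
  proof
    assume "M \<in> conj_copy g G"
    then show "adj g ** M ** g \<in> G"
      by (auto simp: conj_copy_def cancel)
  next
    assume "adj g ** M ** g \<in> G"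
    then show "M \<in> conj_copy g G"
      unfolding conj_copy_def using cancel(2)[of M, symmetric] by (rule rev_image_eqI)
  qed
qed

lemma matrix_subgroup_conj_copy:
  assumes "g \<in> SU2" "matrix_subgroup G"
  shows "matrix_subgroup (conj_copy g G)"
proof -
  note inv = adj_mult_SU2[OF assms(1)]
  have "(adj g ** A ** g) ** (adj g ** B ** g) = adj g ** A ** (g ** adj g) ** B ** g" for A B
    by (simp only: matrix_mul_assoc)
  then have mult: "adj g ** (A ** B) ** g = (adj g ** A ** g) ** (adj g ** B ** g)" for A B
    using inv by (simp add: matrix_mul_assoc)
  have adj: "adj g ** adj A ** g = adj (adj g ** A ** g)" for A
    by (simp add: adj_mult matrix_mul_assoc)
  show ?thesis
    using assms(2) unfolding matrix_subgroup_def Ball_def conj_copy_mem_iff[OF assms(1)]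
    by (simp add: mult adj inv)
qed

lemma rep_image_subset_iff:
  assumes "matrix_subgroup H"
  shows "rep_image X Y \<subseteq> H \<longleftrightarrow> X \<in> H \<and> Y \<in> H"
proof
  assume "rep_image X Y \<subseteq> H"
  moreover have "X \<in> rep_image X Y" "Y \<in> rep_image X Y"
    using rep_image.mX[OF rep_image.one] rep_image.mY[OF rep_image.one] by simp_all
  ultimately show "X \<in> H \<and> Y \<in> H"
    by blast
next
  assume "X \<in> H \<and> Y \<in> H"
  then show "rep_image X Y \<subseteq> H"
    using assms unfolding matrix_subgroup_def
    by (auto elim: rep_image.induct)
qed

lemma rep_is_iff_common_axis:
  assumes "matrix_subgroup G" and "X \<in> SU2" "Y \<in> SU2"
    and "\<And>g U. g \<in> SU2 \<Longrightarrow> U \<in> SU2 \<Longrightarrow> adj g ** U ** g \<in> G \<longleftrightarrow> P U (Ad g (axis 1 1))"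
  shows "rep_is G X Y \<longleftrightarrow> (\<exists>w. norm w = 1 \<and> P X w \<and> P Y w)"
proof -
  have "rep_is G X Y \<longleftrightarrow> (\<exists>g\<in>SU2. P X (Ad g (axis 1 1)) \<and> P Y (Ad g (axis 1 1)))"
    using assms unfolding rep_is_def
    by (simp add: rep_image_subset_iff matrix_subgroup_conj_copy conj_copy_mem_iff)
  also have "\<dots> \<longleftrightarrow> (\<exists>w. norm w = 1 \<and> P X w \<and> P Y w)"
    using norm_Ad[OF _ norm_axis_1] Ad_surj by blast
  finally show ?thesis .
qed

lemma rep_is_Spin2_std_iff:
  assumes "X \<in> SU2" "Y \<in> SU2"
  shows "rep_is Spin2_std X Y \<longleftrightarrow> im_part X \<times> im_part Y = 0"
  using rep_is_iff_common_axis[where P = "\<lambda>U w. im_part U \<in> span {w}",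
      OF matrix_subgroup_Spin2_std assms conj_in_Spin2_std_iff]
  by (simp add: common_line_iff_cross_eq_0)

lemma rep_is_Pin2_std_iff:
  assumes "X \<in> SU2" "Y \<in> SU2" "im_part X \<times> im_part Y \<noteq> 0"
  shows "rep_is Pin2_std X Y \<longleftrightarrow>
    re_part X = 0 \<and> re_part Y = 0 \<or> re_part X = 0 \<and> im_part X \<bullet> im_part Y = 0
      \<or> re_part Y = 0 \<and> im_part X \<bullet> im_part Y = 0"
  using rep_is_iff_common_axis[where P = "\<lambda>U w. im_part U \<in> span {w} \<or> re_part U = 0 \<and> im_part U \<bullet> w = 0",
      OF matrix_subgroup_Pin2_std assms(1,2) conj_in_Pin2_std_iff]
  by (simp add: common_line_or_orthogonal_iff[OF assms(3)])

theorem proposition4p1: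
  fixes X Y :: cmat
  assumes "X \<in> SU2" and "Y \<in> SU2"
  defines "a \<equiv> trace X" and "b \<equiv> trace Y" and "c \<equiv> trace (adj (X ** Y))"
  shows "(rep_is Spin2_std X Y \<longleftrightarrow> a\<^sup>2 + b\<^sup>2 + c\<^sup>2 - a * b * c - 4 = 0)
     \<and> ((rep_is Pin2_std X Y \<and> \<not> rep_is Spin2_std X Y) \<longleftrightarrow>
          (a\<^sup>2 + b\<^sup>2 + c\<^sup>2 - a * b * c - 4 \<noteq> 0 \<and>
           ((trace X = 0 \<and> trace Y = 0) \<or> (trace X = 0 \<and> trace (X ** Y) = 0)
            \<or> (trace Y = 0 \<and> trace (X ** Y) = 0))))"
proof -
  note X = assms(1) and Y = assms(2)
  have fricke_zero_iff: "a\<^sup>2 + b\<^sup>2 + c\<^sup>2 - a * b * c - 4 = 0 \<longleftrightarrow> im_part X \<times> im_part Y = 0"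
    unfolding a_def b_def c_def fricke_polynomial_SU2[OF X Y] by simp
  have "trace X = 0 \<longleftrightarrow> re_part X = 0" "trace Y = 0 \<longleftrightarrow> re_part Y = 0"
    "trace (X ** Y) = 0 \<longleftrightarrow> re_part X * re_part Y = im_part X \<bullet> im_part Y"
    using X Y by (simp_all add: trace_SU2 trace_mult_SU2 flip: of_real_mult)
  then have traces_zero_iff:
    "((trace X = 0 \<and> trace Y = 0) \<or> (trace X = 0 \<and> trace (X ** Y) = 0)
      \<or> (trace Y = 0 \<and> trace (X ** Y) = 0)) \<longleftrightarrow>
     re_part X = 0 \<and> re_part Y = 0 \<or> re_part X = 0 \<and> im_part X \<bullet> im_part Y = 0
      \<or> re_part Y = 0 \<and> im_part X \<bullet> im_part Y = 0"
    by auto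
  show ?thesis
    using rep_is_Spin2_std_iff[OF X Y] rep_is_Pin2_std_iff[OF X Y] fricke_zero_iff traces_zero_iff
    by blast
qed

end
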